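(* Let $1\le r\le n$ and let $P_1,\dots,P_n$ be PRDS p-values satisfying the strong alternatives assumption: for every $\alpha>0$ and every $i$, $\sup_{\theta_i\in\Theta_{1i}}\Pr_{\theta_i}(P_i\le\alpha)=1$. Let $f(P_1,\dots,P_n)$ be a valid monotone p-value for $H_0^{r/n}$, and for $u\subset\{1,\dots,n\}$ with $|u|=n-r+1$ define $$g_u(\boldsymbol p_u)=\inf_{\boldsymbol p_{-u}\in(0,1]^{r-1}} f(p_1,\dots,p_n).$$ Then $g_u$ is a valid monotone meta-analysis p-value for $H_{0u}$.
   Context: Component hypotheses $H_{0i}:\theta_i\in\Theta_{0i}$ vs $H_{1i}:\theta_i\in\Theta_{1i}$ ($\Theta_i=\Theta_{0i}\cup\Theta_{1i}$ disjoint), $i=1,\dots,n$; $P_i$ has distribution $\Pr_{\theta_i}$ and each $P_i$ is valid: $\sup_{\theta_i\in\Theta_{0i}}\Pr_{\theta_i}(P_i\le\alpha)\le\alpha$ for all $\alpha\in[0,1]$. The joint law of $\boldsymbol P$ is $\Pr_\theta$, $\theta\in\prod_i\Theta_i$. PRDS means positively regression dependent in the sense of Benjamini and Yekutieli (2001) under every $\theta$; in particular $\Pr_\theta(P_1\le p_1,\dots,P_n\le p_n)\ge\prod_i\Pr_{\theta_i}(P_i\le p_i)$ for all $\boldsymbol p\in[0,1]^n$ and all $\theta$. For $u\subset\{1,\dots,n\}$, $-u$ is its complement, $\boldsymbol p_u=(p_j)_{j\in u}$, $H_{0u}$: $\theta_j\in\Theta_{0j}$ for all $j\in u$ (null space $\Theta_{0u}$).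 $H_0^{r/n}$: at most $r-1$ of the $H_{0i}$ are false, null space $\Theta_0^{r/n}$. A combined p-value $f$ is valid for $H_0^{r/n}$ if $\sup_{\theta\in\Theta_0^{r/n}}\Pr_\theta(f(\boldsymbol P)\le\alpha)\le\alpha$ for all $\alpha\in[0,1]$, and monotone if $f$ is non-decreasing in each argument; a meta-analysis p-value $g_u$ is valid for $H_{0u}$ if $\sup_{\theta_u\in\Theta_{0u}}\Pr_{\theta_u}(g_u(\boldsymbol P_u)\le\alpha)\le\alpha$ for all $\alpha$. *)

theory Defs
  imports "HOL-Probability.Probability"
begin

definition increasing_set :: "nat set \<Rightarrow> (nat \<Rightarrow> real) set \<Rightarrow> bool" where
  "increasing_set I D \<longleftrightarrow> D \<subseteq> PiE I (\<lambda>_. UNIV) \<and>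
     (\<forall>x\<in>D. \<forall>y\<in>PiE I (\<lambda>_. UNIV). (\<forall>i\<in>I. x i \<le> y i) \<longrightarrow> y \<in> D)"

text \<open>PRDS in the sense of Benjamini and Yekutieli (2001), on the index set I0 \<subseteq> I:
  for every increasing (measurable) set D and every i in I0, the conditional probability
  Pr(X \<in> D | X_i = x) admits a version h(x) that is non-decreasing in x.\<close>

definition PRDS :: "'w measure \<Rightarrow> nat set \<Rightarrow> nat set \<Rightarrow> (nat \<Rightarrow> 'w \<Rightarrow> real) \<Rightarrow> bool" where
  "PRDS M I I0 X \<longleftrightarrow>
     (\<forall>D. D \<in> sets (PiM I (\<lambda>_. borel)) \<and> increasing_set I D \<longrightarrow>
       (\<forall>i\<in>I0. \<exists>h :: real \<Rightarrow> real. mono h \<and> h \<in> borel_measurable borel \<and>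
          (\<forall>x. h x \<in> {0..1}) \<and>
          (\<forall>B\<in>sets borel.
             measure M {\<omega>\<in>space M. (\<lambda>j\<in>I. X j \<omega>) \<in> D \<and> X i \<omega> \<in> B}
             = (\<integral>\<omega>. indicator B (X i \<omega>) * h (X i \<omega>) \<partial>M))))"

definition monotone_pval :: "nat set \<Rightarrow> ((nat \<Rightarrow> real) \<Rightarrow> real) \<Rightarrow> bool" where
  "monotone_pval I F \<longleftrightarrow>
     (\<forall>x\<in>PiE I (\<lambda>_. {0..1}). \<forall>y\<in>PiE I (\<lambda>_. {0..1}). (\<forall>i\<in>I. x i \<le> y i) \<longrightarrow> F x \<le> F y)"

definition meta_g :: "nat set \<Rightarrow> nat set \<Rightarrow> ((nat \<Rightarrow> real) \<Rightarrow> real) \<Rightarrow> (nat \<Rightarrow> real) \<Rightarrow> real" where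
  "meta_g I u f p = Inf {f (\<lambda>i\<in>I. if i \<in> u then p i else q i) | q. \<forall>j\<in>I - u. q j \<in> {0<..1}}"

end

theory Submission imports Defs begin

text \<open>Padding the coordinates outside u with a constant c gives upper bounds for g_u which,
  f being monotone, decrease to g_u as c \<rightarrow> 0; so up to \<epsilon> the event {g_u \<le> \<alpha>} is
  contained in {f(P_u, c, \<dots>, c) < \<alpha>'} for a fixed small c.  The probability of the latter
  only depends on the law of P_u, hence does not change if the parameter is altered outside u.
  By the strong alternatives assumption we may alter it there so that P_j \<le> c for all j \<notin> u
  with probability close to 1; on that event f(P) \<le> f(P_u, c, \<dots>, c), and f is valid because
  at most |-u| = r - 1 of the nulls are false.\<close>

definition padded_pval :: "nat set \<Rightarrow> nat set \<Rightarrow> ((nat \<Rightarrow> real) \<Rightarrow> real) \<Rightarrow> real \<Rightarrow> (nat \<Rightarrow> real) \<Rightarrow> real"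
  where "padded_pval I u f c p = f (\<lambda>i\<in>I. if i \<in> u then p i else c)"

lemma restrict_if_in_PiE:
  assumes "\<forall>i\<in>u. p i \<in> A" and "\<forall>j\<in>I - u. q j \<in> A"
  shows "(\<lambda>i\<in>I. if i \<in> u then p i else q i) \<in> PiE I (\<lambda>_. A)"
  using assms by (auto simp: PiE_iff)

lemma monotone_pvalD:
  assumes "monotone_pval I f" "x \<in> PiE I (\<lambda>_. {0..1})" "y \<in> PiE I (\<lambda>_. {0..1})"
    and "\<forall>i\<in>I. x i \<le> y i"
  shows "f x \<le> f y"
  using assms unfolding monotone_pval_def by blast

lemma padded_pval_mono:
  assumes "monotone_pval I f" and "c \<in> {0..1}" "c' \<in> {0..1}" "c \<le> c'"
    and "\<forall>i\<in>u. x i \<in> {0..1}" "\<forall>i\<in>u. y i \<in> {0..1}" "\<forall>i\<in>u. x i \<le> y i"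
  shows "padded_pval I u f c x \<le> padded_pval I u f c' y"
  unfolding padded_pval_def
  by (rule monotone_pvalD[OF assms(1)]) (use assms in \<open>auto intro!: restrict_if_in_PiE\<close>)

lemma padded_pval_range:
  assumes "\<forall>x\<in>PiE I (\<lambda>_. {0..1}). f x \<in> {0..1}" and "c \<in> {0..1}" "\<forall>i\<in>u. p i \<in> {0..1}"
  shows "padded_pval I u f c p \<in> {0..1}"
  unfolding padded_pval_def using assms restrict_if_in_PiE[of u p "{0..1}" I "\<lambda>_. c"] by auto

lemma measurable_padded_pval [measurable]:
  assumes [measurable]: "f \<in> borel_measurable (PiM I (\<lambda>_. borel))"
  shows "padded_pval I u f c \<in> borel_measurable (PiM u (\<lambda>_. borel))"
proof -
  have "(\<lambda>x. \<lambda>i\<in>I. if i \<in> u then x i else c) \<in> measurable (PiM u (\<lambda>_. borel)) (PiM I (\<lambda>_. borel))"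
  proof (rule measurable_restrict)
    fix i show "(\<lambda>x. if i \<in> u then x i else c) \<in> borel_measurable (PiM u (\<lambda>_. borel))"
      by (cases "i \<in> u") simp_all
  qed
  then show ?thesis
    unfolding padded_pval_def by measurable
qed

lemma meta_g_eq_INF_padded_pval:
  assumes "finite I" and mono: "monotone_pval I f"
    and range: "\<forall>x\<in>PiE I (\<lambda>_. {0..1}). f x \<in> {0..1}" and p: "\<forall>i\<in>u. p i \<in> {0..1}"
  shows "meta_g I u f p = (INF k. padded_pval I u f (1 / real (Suc k)) p)"
proof -
  define S where "S = {f (\<lambda>i\<in>I. if i \<in> u then p i else q i) | q. \<forall>j\<in>I - u. q j \<in> {0<..1}}"
  define H where "H k = padded_pval I u f (1 / real (Suc k)) p" for k
  have H_in_S: "H k \<in> S" for k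
    unfolding S_def H_def padded_pval_def by (rule CollectI, rule exI[of _ "\<lambda>_. 1 / real (Suc k)"]) auto
  have "0 \<le> s" if "s \<in> S" for s
    using that range restrict_if_in_PiE[of u p "{0..1}" I] p
    by (auto simp: S_def less_imp_le)
  then have bdd: "bdd_below S" "bdd_below (range H)"
    using H_in_S by (fastforce simp: bdd_below_def)+
  have H_below: "\<exists>k. H k \<le> s" if "s \<in> S" for s
  proof -
    from \<open>s \<in> S\<close> obtain q where q: "\<forall>j\<in>I - u. q j \<in> {0<..1}"
      and s: "s = f (\<lambda>i\<in>I. if i \<in> u then p i else q i)"
      unfolding S_def by auto
    define e where "e = Min (insert 1 (q ` (I - u)))"
    have "e > 0" unfolding e_def using \<open>finite I\<close> q by (subst Min_gr_iff) auto
    then obtain k where k: "1 / real (Suc k) < e"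
      using reals_Archimedean by (auto simp: inverse_eq_divide)
    have "\<forall>j\<in>I - u. e \<le> q j" unfolding e_def using \<open>finite I\<close> by auto
    then have "H k \<le> s"
      unfolding H_def padded_pval_def s
      by (intro monotone_pvalD[OF mono] restrict_if_in_PiE)
        (use p q k in \<open>auto simp: less_imp_le dest!: bspec\<close>)
    then show ?thesis ..
  qed
  have "Inf S = (INF k. H k)"
  proof (rule antisym)
    show "Inf S \<le> (INF k. H k)"
      by (rule cINF_greatest) (auto intro: cInf_lower[OF H_in_S bdd(1)])
    show "(INF k. H k) \<le> Inf S"
    proof (rule cInf_greatest)
      show "S \<noteq> {}" using H_in_S by blast
      fix s assume "s \<in> S"
      then obtain k where "H k \<le> s" using H_below by blast
      then show "(INF k. H k) \<le> s" by (rule cINF_lower2[OF bdd(2) UNIV_I])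
    qed
  qed
  then show ?thesis
    unfolding meta_g_def S_def[symmetric] H_def by simp
qed

lemma monotone_pval_meta_g:
  assumes "finite I" and mono: "monotone_pval I f"
    and range: "\<forall>x\<in>PiE I (\<lambda>_. {0..1}). f x \<in> {0..1}"
  shows "monotone_pval u (meta_g I u f)"
  unfolding monotone_pval_def
proof (intro ballI impI)
  fix x y :: "nat \<Rightarrow> real"
  assume "x \<in> PiE u (\<lambda>_. {0..1})" "y \<in> PiE u (\<lambda>_. {0..1})" and xy: "\<forall>i\<in>u. x i \<le> y i"
  then have x: "\<forall>i\<in>u. x i \<in> {0..1}" and y: "\<forall>i\<in>u. y i \<in> {0..1}"
    by (auto simp: PiE_iff)
  have bdd: "bdd_below (range (\<lambda>k. padded_pval I u f (1 / real (Suc k)) x))"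
    by (intro bdd_belowI[of _ 0]) (use padded_pval_range[OF range _ x] in auto)
  have "(INF k. padded_pval I u f (1 / real (Suc k)) x) \<le> (INF k. padded_pval I u f (1 / real (Suc k)) y)"
    by (rule cINF_superset_mono[OF _ bdd]) (use padded_pval_mono[OF mono _ _ _ x y xy] in auto)
  then show "meta_g I u f x \<le> meta_g I u f y"
    using meta_g_eq_INF_padded_pval[OF assms] x y by simp
qed

lemma measure_eq_if_distr_eq:
  assumes "distr M N X = distr M' N X" and "X \<in> measurable M N" "X \<in> measurable M' N"
    and "A \<in> sets N"
  shows "measure M {\<omega>\<in>space M. X \<omega> \<in> A} = measure M' {\<omega>\<in>space M'. X \<omega> \<in> A}"
  using measure_distr[of X M N A] measure_distr[of X M' N A] assms
  by (simp add: vimage_def Int_def conj_commute)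

lemma (in finite_measure) measure_lt_measure_incseq:
  assumes "range A \<subseteq> sets M" "incseq A" and "G \<subseteq> (\<Union>k. A k)" and "0 < e"
  shows "\<exists>k. measure M G < measure M (A k) + e"
proof -
  have "(\<lambda>k. measure M (A k)) \<longlonglongrightarrow> measure M (\<Union>k. A k)"
    using assms by (intro finite_Lim_measure_incseq)
  then have "\<forall>\<^sub>F k in sequentially. measure M (\<Union>k. A k) - e < measure M (A k)"
    using \<open>0 < e\<close> by (intro order_tendstoD(1)) auto
  then obtain k where "measure M (\<Union>k. A k) - e < measure M (A k)"
    by (auto simp: eventually_sequentially)
  moreover have "measure M G \<le> measure M (\<Union>k. A k)"
    using assms by (intro finite_measure_mono) auto
  ultimately have "measure M G < measure M (A k) + e" by linarith
  then show ?thesis ..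
qed

lemma le_of_le_approx_from_above:
  fixes x a :: real
  assumes "x \<le> 1" and approx: "\<And>a' e. a < a' \<Longrightarrow> a' \<le> 1 \<Longrightarrow> 0 < e \<Longrightarrow> x \<le> a' + e"
  shows "x \<le> a"
proof (cases "a < 1")
  case True
  show ?thesis
  proof (rule field_le_epsilon)
    fix e :: real assume "0 < e"
    then have "x \<le> min 1 (a + e / 2) + e / 2"
      using True by (intro approx) auto
    then show "x \<le> a + e" by linarith
  qed
qed (use \<open>x \<le> 1\<close> in auto)

lemma (in finite_measure) measure_padded_pval_less_le:
  assumes "finite I" "u \<subseteq> I" and f_meas: "f \<in> borel_measurable (PiM I (\<lambda>_. borel))"
    and mono: "monotone_pval I f"
    and P_meas: "\<And>j. j \<in> I \<Longrightarrow> P j \<in> borel_measurable M"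
    and P_range: "\<And>j \<omega>. j \<in> I \<Longrightarrow> \<omega> \<in> space M \<Longrightarrow> P j \<omega> \<in> {0..1}"
    and c: "c \<in> {0..1}"
  shows "measure M {\<omega>\<in>space M. padded_pval I u f c (\<lambda>j\<in>u. P j \<omega>) < a}
    \<le> measure M {\<omega>\<in>space M. f (\<lambda>i\<in>I. P i \<omega>) \<le> a} + (\<Sum>j\<in>I - u. measure M {\<omega>\<in>space M. c < P j \<omega>})"
proof -
  define E where "E = {\<omega>\<in>space M. f (\<lambda>i\<in>I. P i \<omega>) \<le> a}"
  define B where "B j = {\<omega>\<in>space M. c < P j \<omega>}" for j
  have "(\<lambda>\<omega>. \<lambda>i\<in>I. P i \<omega>) \<in> measurable M (PiM I (\<lambda>_. borel))"
    using P_meas by (intro measurable_restrict) auto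
  then have "(\<lambda>\<omega>. f (\<lambda>i\<in>I. P i \<omega>)) \<in> borel_measurable M"
    using f_meas by (rule measurable_compose)
  then have E_sets: "E \<in> sets M"
    unfolding E_def by measurable
  have B_sets: "B j \<in> sets M" if "j \<in> I" for j
    using P_meas[OF that] unfolding B_def by measurable
  have "{\<omega>\<in>space M. padded_pval I u f c (\<lambda>j\<in>u. P j \<omega>) < a} \<subseteq> E \<union> (\<Union>j\<in>I - u. B j)"
  proof clarify
    fix \<omega> assume \<omega>: "\<omega> \<in> space M" and less: "padded_pval I u f c (\<lambda>j\<in>u. P j \<omega>) < a"
      and "\<omega> \<notin> (\<Union>j\<in>I - u. B j)"
    then have "\<forall>j\<in>I - u. P j \<omega> \<le> c"
      by (auto simp: B_def not_less)
    then have "f (\<lambda>i\<in>I. P i \<omega>) \<le> padded_pval I u f c (\<lambda>j\<in>u. P j \<omega>)"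
      unfolding padded_pval_def
      by (intro monotone_pvalD[OF mono] restrict_if_in_PiE) (use P_range \<omega> c \<open>u \<subseteq> I\<close> in auto)
    with less \<omega> show "\<omega> \<in> E"
      by (simp add: E_def)
  qed
  then have "measure M {\<omega>\<in>space M. padded_pval I u f c (\<lambda>j\<in>u. P j \<omega>) < a}
      \<le> measure M (E \<union> (\<Union>j\<in>I - u. B j))"
    using E_sets B_sets by (intro finite_measure_mono) auto
  also have "\<dots> \<le> measure M E + measure M (\<Union>j\<in>I - u. B j)"
    using E_sets B_sets by (intro measure_Un_le) auto
  also have "measure M (\<Union>j\<in>I - u. B j) \<le> (\<Sum>j\<in>I - u. measure M (B j))"
    using \<open>finite I\<close> B_sets by (intro finite_measure_subadditive_finite) auto
  finally show ?thesis
    unfolding E_def B_def by simp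
qed

lemma measurable_meta_g:
  assumes "finite I" and f_meas: "f \<in> borel_measurable (PiM I (\<lambda>_. borel))"
    and mono: "monotone_pval I f" and range: "\<forall>x\<in>PiE I (\<lambda>_. {0..1}). f x \<in> {0..1}"
    and X_meas [measurable]: "X \<in> measurable N (PiM u (\<lambda>_. borel))"
    and X_range: "\<And>\<omega> i. \<omega> \<in> space N \<Longrightarrow> i \<in> u \<Longrightarrow> X \<omega> i \<in> {0..1}"
  shows "(\<lambda>\<omega>. meta_g I u f (X \<omega>)) \<in> borel_measurable N"
proof (rule measurable_cong[THEN iffD2])
  show "meta_g I u f (X \<omega>) = (INF k. padded_pval I u f (1 / real (Suc k)) (X \<omega>))"
    if "\<omega> \<in> space N" for \<omega>
    using X_range[OF that] by (intro meta_g_eq_INF_padded_pval[OF assms(1) mono range]) auto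
  show "(\<lambda>\<omega>. INF k. padded_pval I u f (1 / real (Suc k)) (X \<omega>)) \<in> borel_measurable N"
    using f_meas by measurable
qed

locale composite_pvalue_model =
  fixes I :: "nat set" and \<Theta>0 \<Theta>1 :: "nat \<Rightarrow> 'a set" and \<Theta> :: "(nat \<Rightarrow> 'a) set"
    and M :: "(nat \<Rightarrow> 'a) \<Rightarrow> 'w measure" and P :: "nat \<Rightarrow> 'w \<Rightarrow> real"
  assumes finite_I: "finite I"
    and \<Theta>_def: "\<Theta> = PiE I (\<lambda>i. \<Theta>0 i \<union> \<Theta>1 i)"
    and disjoint: "\<And>i. i \<in> I \<Longrightarrow> \<Theta>0 i \<inter> \<Theta>1 i = {}"
    and prob_space_M: "\<And>\<theta>. \<theta> \<in> \<Theta> \<Longrightarrow> prob_space (M \<theta>)"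
    and P_measurable: "\<And>\<theta> i. \<theta> \<in> \<Theta> \<Longrightarrow> i \<in> I \<Longrightarrow> P i \<in> borel_measurable (M \<theta>)"
    and P_range: "\<And>\<theta> i \<omega>. \<theta> \<in> \<Theta> \<Longrightarrow> i \<in> I \<Longrightarrow> \<omega> \<in> space (M \<theta>) \<Longrightarrow> P i \<omega> \<in> {0..1}"
    and marginal: "\<And>v \<theta> \<theta>'. v \<subseteq> I \<Longrightarrow> \<theta> \<in> \<Theta> \<Longrightarrow> \<theta>' \<in> \<Theta> \<Longrightarrow> (\<forall>j\<in>v. \<theta> j = \<theta>' j) \<Longrightarrow>
      distr (M \<theta>) (PiM v (\<lambda>_. borel)) (\<lambda>\<omega>. \<lambda>j\<in>v. P j \<omega>)
        = distr (M \<theta>') (PiM v (\<lambda>_. borel)) (\<lambda>\<omega>. \<lambda>j\<in>v. P j \<omega>)"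
    and strong_alternatives: "\<And>\<alpha> i \<epsilon>. 0 < \<alpha> \<Longrightarrow> i \<in> I \<Longrightarrow> 0 < \<epsilon> \<Longrightarrow>
      \<exists>\<theta>\<in>\<Theta>. 1 - \<epsilon> < measure (M \<theta>) {\<omega>\<in>space (M \<theta>). P i \<omega> \<le> \<alpha>}"
begin

lemma measurable_restrict_P:
  assumes "v \<subseteq> I" "\<theta> \<in> \<Theta>"
  shows "(\<lambda>\<omega>. \<lambda>j\<in>v. P j \<omega>) \<in> measurable (M \<theta>) (PiM v (\<lambda>_. borel))"
  using assms P_measurable by (intro measurable_restrict) auto

lemma measure_marginal_eq:
  assumes "v \<subseteq> I" "\<theta> \<in> \<Theta>" "\<theta>' \<in> \<Theta>" "\<forall>j\<in>v. \<theta> j = \<theta>' j"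
    and "A \<in> sets (PiM v (\<lambda>_. borel))"
  shows "measure (M \<theta>) {\<omega>\<in>space (M \<theta>). (\<lambda>j\<in>v. P j \<omega>) \<in> A}
    = measure (M \<theta>') {\<omega>\<in>space (M \<theta>'). (\<lambda>j\<in>v. P j \<omega>) \<in> A}"
  by (rule measure_eq_if_distr_eq[OF marginal measurable_restrict_P measurable_restrict_P])
    (use assms in auto)

lemma exists_parameter_small_outside:
  assumes "u \<subseteq> I" "\<theta> \<in> \<Theta>" "0 < \<delta>" "0 < \<epsilon>"
  shows "\<exists>\<theta>'\<in>\<Theta>. (\<forall>j\<in>u. \<theta>' j = \<theta> j) \<and>
    (\<forall>j\<in>I - u. measure (M \<theta>') {\<omega>\<in>space (M \<theta>'). \<delta> < P j \<omega>} < \<epsilon>)"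
proof -
  obtain T where T: "\<And>j. j \<in> I - u \<Longrightarrow> T j \<in> \<Theta> \<and>
      1 - \<epsilon> < measure (M (T j)) {\<omega>\<in>space (M (T j)). P j \<omega> \<le> \<delta>}"
    using strong_alternatives[OF \<open>0 < \<delta>\<close> _ \<open>0 < \<epsilon>\<close>] by (metis DiffD1)
  define \<theta>' where "\<theta>' = (\<lambda>i\<in>I. if i \<in> u then \<theta> i else T i i)"
  have \<theta>': "\<theta>' \<in> \<Theta>"
    using \<open>\<theta> \<in> \<Theta>\<close> T unfolding \<Theta>_def \<theta>'_def by (auto simp: PiE_iff)
  interpret prob_space "M \<theta>'"
    using prob_space_M[OF \<theta>'] .
  have "measure (M \<theta>') {\<omega>\<in>space (M \<theta>'). \<delta> < P j \<omega>} < \<epsilon>" if j: "j \<in> I - u" for j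
  proof -
    have [measurable]: "P j \<in> borel_measurable (M \<theta>')"
      using P_measurable \<theta>' j by blast
    have "measure (M \<theta>') {\<omega>\<in>space (M \<theta>'). (\<lambda>i\<in>{j}. P i \<omega>) \<in> {x\<in>space (PiM {j} (\<lambda>_. borel)). x j \<le> \<delta>}}
        = measure (M (T j)) {\<omega>\<in>space (M (T j)). (\<lambda>i\<in>{j}. P i \<omega>) \<in> {x\<in>space (PiM {j} (\<lambda>_. borel)). x j \<le> \<delta>}}"
      using j \<theta>' T[OF j] by (intro measure_marginal_eq) (auto simp: \<theta>'_def)
    then have "measure (M \<theta>') {\<omega>\<in>space (M \<theta>'). P j \<omega> \<le> \<delta>} = measure (M (T j)) {\<omega>\<in>space (M (T j)). P j \<omega> \<le> \<delta>}"
      by (simp add: space_PiM)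
    moreover have "{\<omega>\<in>space (M \<theta>'). \<delta> < P j \<omega>} = space (M \<theta>') - {\<omega>\<in>space (M \<theta>'). P j \<omega> \<le> \<delta>}"
      by auto
    ultimately show ?thesis
      using T[OF j] prob_compl[of "{\<omega>\<in>space (M \<theta>'). P j \<omega> \<le> \<delta>}"] by simp
  qed
  moreover have "\<forall>j\<in>u. \<theta>' j = \<theta> j"
    using \<open>u \<subseteq> I\<close> by (auto simp: \<theta>'_def)
  ultimately show ?thesis
    using \<theta>' by blast
qed

lemma measure_padded_pval_less_bound:
  assumes u: "u \<subseteq> I" and f_meas: "f \<in> borel_measurable (PiM I (\<lambda>_. borel))"
    and mono: "monotone_pval I f"
    and f_valid: "\<And>\<theta> \<alpha>. \<theta> \<in> \<Theta> \<Longrightarrow> {i\<in>I. \<theta> i \<in> \<Theta>1 i} \<subseteq> I - u \<Longrightarrow> \<alpha> \<in> {0..1} \<Longrightarrow>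
      measure (M \<theta>) {\<omega>\<in>space (M \<theta>). f (\<lambda>i\<in>I. P i \<omega>) \<le> \<alpha>} \<le> \<alpha>"
    and \<theta>: "\<theta> \<in> \<Theta>" and null: "\<forall>j\<in>u. \<theta> j \<in> \<Theta>0 j"
    and c: "c \<in> {0<..1}" and \<alpha>: "\<alpha> \<in> {0..1}" and "0 < \<epsilon>"
  shows "measure (M \<theta>) {\<omega>\<in>space (M \<theta>). padded_pval I u f c (\<lambda>j\<in>u. P j \<omega>) < \<alpha>} \<le> \<alpha> + \<epsilon>"
proof -
  define \<epsilon>' where "\<epsilon>' = \<epsilon> / (card (I - u) + 1)"
  have "0 < \<epsilon>'"
    using \<open>0 < \<epsilon>\<close> by (simp add: \<epsilon>'_def)
  then obtain \<theta>' where \<theta>': "\<theta>' \<in> \<Theta>" and agree: "\<forall>j\<in>u. \<theta>' j = \<theta> j"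
    and small: "\<forall>j\<in>I - u. measure (M \<theta>') {\<omega>\<in>space (M \<theta>'). c < P j \<omega>} < \<epsilon>'"
    using exists_parameter_small_outside[OF u \<theta> _ \<open>0 < \<epsilon>'\<close>, of c] c by auto
  interpret prob_space "M \<theta>'"
    using prob_space_M[OF \<theta>'] .
  have "{i\<in>I. \<theta>' i \<in> \<Theta>1 i} \<subseteq> I - u"
  proof clarify
    fix i assume "i \<in> I" "\<theta>' i \<in> \<Theta>1 i" "i \<in> u"
    then have "\<theta>' i \<in> \<Theta>0 i \<inter> \<Theta>1 i"
      using agree null by auto
    with disjoint[OF \<open>i \<in> I\<close>] show False
      by blast
  qed
  then have f_valid': "measure (M \<theta>') {\<omega>\<in>space (M \<theta>'). f (\<lambda>i\<in>I. P i \<omega>) \<le> \<alpha>} \<le> \<alpha>"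
    using f_valid[OF \<theta>'] \<alpha> by blast
  have "measure (M \<theta>) {\<omega>\<in>space (M \<theta>). (\<lambda>j\<in>u. P j \<omega>) \<in> {x\<in>space (PiM u (\<lambda>_. borel)). padded_pval I u f c x < \<alpha>}}
      = measure (M \<theta>') {\<omega>\<in>space (M \<theta>'). (\<lambda>j\<in>u. P j \<omega>) \<in> {x\<in>space (PiM u (\<lambda>_. borel)). padded_pval I u f c x < \<alpha>}}"
    using u \<theta> \<theta>' agree f_meas by (intro measure_marginal_eq) auto
  then have "measure (M \<theta>) {\<omega>\<in>space (M \<theta>). padded_pval I u f c (\<lambda>j\<in>u. P j \<omega>) < \<alpha>}
      = measure (M \<theta>') {\<omega>\<in>space (M \<theta>'). padded_pval I u f c (\<lambda>j\<in>u. P j \<omega>) < \<alpha>}"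
    by (simp add: space_PiM)
  also have "\<dots> \<le> measure (M \<theta>') {\<omega>\<in>space (M \<theta>'). f (\<lambda>i\<in>I. P i \<omega>) \<le> \<alpha>}
      + (\<Sum>j\<in>I - u. measure (M \<theta>') {\<omega>\<in>space (M \<theta>'). c < P j \<omega>})"
    using finite_I u f_meas mono P_measurable[OF \<theta>'] P_range[OF \<theta>'] c
    by (intro measure_padded_pval_less_le) auto
  also have "\<dots> \<le> \<alpha> + card (I - u) * \<epsilon>'"
  proof -
    have "(\<Sum>j\<in>I - u. measure (M \<theta>') {\<omega>\<in>space (M \<theta>'). c < P j \<omega>}) \<le> (\<Sum>j\<in>I - u. \<epsilon>')"
      using small by (intro sum_mono) (simp add: less_imp_le)
    then show ?thesis
      using f_valid' by simp
  qed
  also have "\<dots> \<le> \<alpha> + \<epsilon>"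
    using \<open>0 < \<epsilon>\<close> by (simp add: \<epsilon>'_def field_simps)
  finally show ?thesis .
qed

lemma meta_g_valid:
  assumes u: "u \<subseteq> I" and f_meas: "f \<in> borel_measurable (PiM I (\<lambda>_. borel))"
    and mono: "monotone_pval I f" and range: "\<forall>x\<in>PiE I (\<lambda>_. {0..1}). f x \<in> {0..1}"
    and f_valid: "\<And>\<theta> \<alpha>. \<theta> \<in> \<Theta> \<Longrightarrow> {i\<in>I. \<theta> i \<in> \<Theta>1 i} \<subseteq> I - u \<Longrightarrow> \<alpha> \<in> {0..1} \<Longrightarrow>
      measure (M \<theta>) {\<omega>\<in>space (M \<theta>). f (\<lambda>i\<in>I. P i \<omega>) \<le> \<alpha>} \<le> \<alpha>"
    and \<theta>: "\<theta> \<in> \<Theta>" and null: "\<forall>j\<in>u. \<theta> j \<in> \<Theta>0 j" and "0 \<le> \<alpha>"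
  shows "measure (M \<theta>) {\<omega>\<in>space (M \<theta>). meta_g I u f (\<lambda>j\<in>u. P j \<omega>) \<le> \<alpha>} \<le> \<alpha>"
proof (rule le_of_le_approx_from_above)
  interpret prob_space "M \<theta>"
    using prob_space_M[OF \<theta>] .
  show "measure (M \<theta>) {\<omega>\<in>space (M \<theta>). meta_g I u f (\<lambda>j\<in>u. P j \<omega>) \<le> \<alpha>} \<le> 1"
    by (rule prob_le_1)
  fix \<alpha>' e :: real
  assume "\<alpha> < \<alpha>'" "\<alpha>' \<le> 1" "0 < e"
  define A where "A k = {\<omega>\<in>space (M \<theta>). padded_pval I u f (1 / real (Suc k)) (\<lambda>j\<in>u. P j \<omega>) < \<alpha>'}" for k
  have P_u: "\<forall>i\<in>u. (\<lambda>j\<in>u. P j \<omega>) i \<in> {0..1}" if "\<omega> \<in> space (M \<theta>)" for \<omega>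
    using P_range[OF \<theta> _ that] u by auto
  have [measurable]: "(\<lambda>\<omega>. \<lambda>j\<in>u. P j \<omega>) \<in> measurable (M \<theta>) (PiM u (\<lambda>_. borel))"
    using measurable_restrict_P[OF u \<theta>] .
  have "range A \<subseteq> sets (M \<theta>)"
    using f_meas unfolding A_def by auto
  moreover have "incseq A"
  proof (rule incseq_SucI)
    fix k
    have "padded_pval I u f (1 / real (Suc (Suc k))) (\<lambda>j\<in>u. P j \<omega>)
        \<le> padded_pval I u f (1 / real (Suc k)) (\<lambda>j\<in>u. P j \<omega>)" if "\<omega> \<in> space (M \<theta>)" for \<omega>
      using P_u[OF that] by (intro padded_pval_mono[OF mono]) (auto simp: field_simps)
    then show "A k \<subseteq> A (Suc k)"
      unfolding A_def by fastforce
  qed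
  moreover have "{\<omega>\<in>space (M \<theta>). meta_g I u f (\<lambda>j\<in>u. P j \<omega>) \<le> \<alpha>} \<subseteq> (\<Union>k. A k)"
  proof clarify
    fix \<omega> assume \<omega>: "\<omega> \<in> space (M \<theta>)" and "meta_g I u f (\<lambda>j\<in>u. P j \<omega>) \<le> \<alpha>"
    then have "(INF k. padded_pval I u f (1 / real (Suc k)) (\<lambda>j\<in>u. P j \<omega>)) < \<alpha>'"
      using meta_g_eq_INF_padded_pval[OF finite_I mono range P_u[OF \<omega>]] \<open>\<alpha> < \<alpha>'\<close> by linarith
    then have "\<exists>x\<in>range (\<lambda>k. padded_pval I u f (1 / real (Suc k)) (\<lambda>j\<in>u. P j \<omega>)). x < \<alpha>'"
      by (intro cInf_lessD) auto
    then obtain k where "padded_pval I u f (1 / real (Suc k)) (\<lambda>j\<in>u. P j \<omega>) < \<alpha>'"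
      by blast
    with \<omega> show "\<omega> \<in> (\<Union>k. A k)"
      by (auto simp: A_def)
  qed
  ultimately obtain k where "measure (M \<theta>) {\<omega>\<in>space (M \<theta>). meta_g I u f (\<lambda>j\<in>u. P j \<omega>) \<le> \<alpha>}
      < measure (M \<theta>) (A k) + e / 2"
    using \<open>0 < e\<close> measure_lt_measure_incseq[of A] by (metis half_gt_zero)
  moreover have "measure (M \<theta>) (A k) \<le> \<alpha>' + e / 2"
    unfolding A_def using \<open>0 \<le> \<alpha>\<close> \<open>\<alpha> < \<alpha>'\<close> \<open>\<alpha>' \<le> 1\<close> \<open>0 < e\<close>
    by (intro measure_padded_pval_less_bound[OF u f_meas mono f_valid \<theta> null]) auto
  ultimately show "measure (M \<theta>) {\<omega>\<in>space (M \<theta>). meta_g I u f (\<lambda>j\<in>u. P j \<omega>) \<le> \<alpha>} \<le> \<alpha>' + e"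
    by linarith
qed

end

theorem lemma1:
  fixes n r :: nat
    and \<Theta>0 \<Theta>1 :: "nat \<Rightarrow> 'a set"
    and M :: "(nat \<Rightarrow> 'a) \<Rightarrow> 'w measure"
    and P :: "nat \<Rightarrow> 'w \<Rightarrow> real"
    and f :: "(nat \<Rightarrow> real) \<Rightarrow> real"
    and u :: "nat set"
  defines "\<Theta> \<equiv> PiE {1..n} (\<lambda>i. \<Theta>0 i \<union> \<Theta>1 i)"
  assumes r: "1 \<le> r" "r \<le> n"
    and disj: "\<forall>i\<in>{1..n}. \<Theta>0 i \<inter> \<Theta>1 i = {}"
    and prob: "\<forall>\<theta>\<in>\<Theta>. prob_space (M \<theta>)"
    and P_meas: "\<forall>\<theta>\<in>\<Theta>. \<forall>i\<in>{1..n}. P i \<in> borel_measurable (M \<theta>)"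
    and P_range: "\<forall>\<theta>\<in>\<Theta>. \<forall>i\<in>{1..n}. \<forall>\<omega>\<in>space (M \<theta>). P i \<omega> \<in> {0..1}"
    and marginal: "\<forall>v. v \<subseteq> {1..n} \<longrightarrow> (\<forall>\<theta>\<in>\<Theta>. \<forall>\<theta>'\<in>\<Theta>. (\<forall>j\<in>v. \<theta> j = \<theta>' j) \<longrightarrow>
        distr (M \<theta>) (PiM v (\<lambda>_. borel)) (\<lambda>\<omega>. \<lambda>j\<in>v. P j \<omega>)
      = distr (M \<theta>') (PiM v (\<lambda>_. borel)) (\<lambda>\<omega>. \<lambda>j\<in>v. P j \<omega>))"
    and P_valid: "\<forall>i\<in>{1..n}. \<forall>\<theta>\<in>\<Theta>. \<theta> i \<in> \<Theta>0 i \<longrightarrow>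
        (\<forall>\<alpha>\<in>{0..1}. measure (M \<theta>) {\<omega>\<in>space (M \<theta>). P i \<omega> \<le> \<alpha>} \<le> \<alpha>)"
    and prds: "\<forall>\<theta>\<in>\<Theta>. PRDS (M \<theta>) {1..n} {1..n} P"
    and strong_alt: "\<forall>\<alpha>>0. \<forall>i\<in>{1..n}. \<forall>\<epsilon>>0. \<exists>\<theta>\<in>\<Theta>. \<theta> i \<in> \<Theta>1 i \<and>
        measure (M \<theta>) {\<omega>\<in>space (M \<theta>). P i \<omega> \<le> \<alpha>} > 1 - \<epsilon>"
    and f_meas: "f \<in> borel_measurable (PiM {1..n} (\<lambda>_. borel))"
    and f_range: "\<forall>x\<in>PiE {1..n} (\<lambda>_. {0..1}). f x \<in> {0..1}"
    and f_mono: "monotone_pval {1..n} f"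
    and f_valid: "\<forall>\<theta>\<in>\<Theta>. card {i\<in>{1..n}. \<theta> i \<in> \<Theta>1 i} \<le> r - 1 \<longrightarrow>
        (\<forall>\<alpha>\<in>{0..1}. measure (M \<theta>) {\<omega>\<in>space (M \<theta>). f (\<lambda>i\<in>{1..n}. P i \<omega>) \<le> \<alpha>} \<le> \<alpha>)"
    and u: "u \<subseteq> {1..n}" "card u = n - r + 1"
  shows "monotone_pval u (meta_g {1..n} u f) \<and>
    (\<forall>\<theta>\<in>\<Theta>. (\<forall>j\<in>u. \<theta> j \<in> \<Theta>0 j) \<longrightarrow>
       (\<lambda>\<omega>. meta_g {1..n} u f (\<lambda>j\<in>u. P j \<omega>)) \<in> borel_measurable (M \<theta>) \<and>
       (\<forall>\<alpha>\<in>{0..1}. measure (M \<theta>) {\<omega>\<in>space (M \<theta>). meta_g {1..n} u f (\<lambda>j\<in>u. P j \<omega>) \<le> \<alpha>} \<le> \<alpha>))"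
proof -
  interpret composite_pvalue_model "{1..n}" \<Theta>0 \<Theta>1 \<Theta> M P
  proof (rule composite_pvalue_model.intro)
    show "\<Theta> = PiE {1..n} (\<lambda>i. \<Theta>0 i \<union> \<Theta>1 i)"
      by (simp add: \<Theta>_def)
  qed (use disj prob P_meas P_range marginal strong_alt in blast)+
  have "card ({1..n} - u) = r - 1"
    using card_Diff_subset[of u "{1..n}"] u r finite_subset[OF u(1)] by simp
  then have f_valid': "measure (M \<theta>) {\<omega>\<in>space (M \<theta>). f (\<lambda>i\<in>{1..n}. P i \<omega>) \<le> \<alpha>} \<le> \<alpha>"
    if "\<theta> \<in> \<Theta>" "{i\<in>{1..n}. \<theta> i \<in> \<Theta>1 i} \<subseteq> {1..n} - u" "\<alpha> \<in> {0..1}" for \<theta> \<alpha>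
    using f_valid that card_mono[OF _ that(2)] by auto
  have "(\<lambda>\<omega>. meta_g {1..n} u f (\<lambda>j\<in>u. P j \<omega>)) \<in> borel_measurable (M \<theta>)" if "\<theta> \<in> \<Theta>" for \<theta>
    using that u P_range
    by (intro measurable_meta_g[OF _ f_meas f_mono f_range measurable_restrict_P]) auto
  then show ?thesis
    using monotone_pval_meta_g[OF _ f_mono f_range] meta_g_valid[OF u(1) f_meas f_mono f_range f_valid']
    by auto
qed

end
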